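(* Let $s\ge 1$, $q\in\{1,\dots,5^s-1\}$, $n\ge 3$ and $i\ge 1$ be integers. Consider the cylindrical Lights Out game on a board with $i$ rows and $n$ columns whose lights have $k=5^s$ states, with every light initially in the same state $k-q$. If $i\equiv 0\pmod{5^s}$ or $i\equiv -1\pmod{5^s}$, then the game is one-pass solvable.
   Context: Cylindrical Lights Out game: a grid of buttons with $i$ rows (numbered $1,\dots,i$ from top to bottom) and $n$ columns, whose left and right sides are identified, so column $1$ and column $n$ are adjacent; rows do not wrap around. Each button has a light whose state is an element of $\mathbb{Z}/k\mathbb{Z}$, state $0$ meaning "off". Pressing a button once adds $1 \pmod k$ to the state of its own light and to the states of the lights orthogonally adjacent to it (above, below, left, right, where they exist, with columns taken cyclically). One-pass chasing: for $r=2,3,\dots,i$ in turn, press each button in row $r$ the number of times in $\{0,\dots,k-1\}$ needed to bring the light directly above it (in row $r-1$) to state $0$. The game is one-pass solvable if after this procedure all lights on the board are in state $0$. *)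

theory Defs
  imports Main
begin

text \<open>Board positions are pairs (row, column) with rows 1..i and columns 1..n;
columns are taken cyclically. Light states are integers kept reduced mod k.\<close>

definition on_board :: "nat \<Rightarrow> nat \<Rightarrow> nat \<times> nat \<Rightarrow> bool" where
  "on_board i n p \<longleftrightarrow> fst p \<in> {1..i} \<and> snd p \<in> {1..n}"

definition adjacent :: "nat \<Rightarrow> nat \<Rightarrow> nat \<times> nat \<Rightarrow> nat \<times> nat \<Rightarrow> bool" where
  "adjacent i n p p' \<longleftrightarrow> on_board i n p \<and> on_board i n p' \<and>
     ((snd p = snd p' \<and> (fst p' = fst p + 1 \<or> fst p = fst p' + 1)) \<or>
      (fst p = fst p' \<and> (int (snd p') - int (snd p)) mod int n \<in> {1, int n - 1}))"

definition press :: "nat \<Rightarrow> nat \<Rightarrow> nat \<Rightarrow> nat \<times> nat \<Rightarrow> int \<Rightarrow> (nat \<times> nat \<Rightarrow> int) \<Rightarrow> (nat \<times> nat \<Rightarrow> int)" where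
  "press k i n b t st = (\<lambda>x. if x = b \<or> adjacent i n b x then (st x + t) mod int k else st x)"

definition chase_row :: "nat \<Rightarrow> nat \<Rightarrow> nat \<Rightarrow> (nat \<times> nat \<Rightarrow> int) \<Rightarrow> nat \<Rightarrow> (nat \<times> nat \<Rightarrow> int)" where
  "chase_row k i n st r =
     fold (\<lambda>c st'. press k i n (r, c) ((- st' (r - 1, c)) mod int k) st') [1..<n+1] st"

definition one_pass :: "nat \<Rightarrow> nat \<Rightarrow> nat \<Rightarrow> (nat \<times> nat \<Rightarrow> int) \<Rightarrow> (nat \<times> nat \<Rightarrow> int)" where
  "one_pass k i n st = fold (\<lambda>r st'. chase_row k i n st' r) [2..<i+1] st"

definition one_pass_solvable :: "nat \<Rightarrow> nat \<Rightarrow> nat \<Rightarrow> (nat \<times> nat \<Rightarrow> int) \<Rightarrow> bool" where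
  "one_pass_solvable k i n st0 \<longleftrightarrow>
     (\<forall>r\<in>{1..i}. \<forall>c\<in>{1..n}. one_pass k i n st0 (r, c) mod int k = 0)"

end

(* Chasing a uniformly lit board keeps every row uniform, so everything reduces to one
   integer sequence: modulo k, every button of row j is pressed -a * press_seq j times, where
   a is the initial state, and after the last row has been chased that row holds
   a * press_seq (i + 1) while all rows above it are off.  It therefore suffices that 5^s
   divides press_seq (i + 1).  The addition formula for press_seq shows that if N divides
   press_seq N and press_seq (N + 1), then press_seq (m N) and press_seq (m N + 1) are
   congruent to m press_seq N and m press_seq (N + 1) modulo N^2.  Starting from
   press_seq 5 = -15 and press_seq 6 = 40, this lifts divisibility from 5^s to 5^(s+1), and
   then passes it to all multiples of 5^s. *)

theory Submission
  imports Defs "HOL-Number_Theory.Cong"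
begin

fun press_seq :: "nat \<Rightarrow> int" where
  "press_seq 0 = 0"
| "press_seq (Suc 0) = 0"
| "press_seq (Suc (Suc r)) = 1 - 3 * press_seq (Suc r) - press_seq r"

lemma press_seq_add:
  "press_seq (m + r) = (1 - press_seq (Suc r) - 4 * press_seq r) * press_seq m
     + (press_seq (Suc r) - press_seq r) * press_seq (Suc m) + press_seq r"
  by (induction m rule: press_seq.induct) (simp_all add: algebra_simps)

lemma press_seq_mult_cong:
  fixes N :: nat
  assumes "int N dvd press_seq N" and "int N dvd press_seq (Suc N)"
  shows "[press_seq (m * N) = int m * press_seq N] (mod (int N)\<^sup>2)
    \<and> [press_seq (Suc (m * N)) = int m * press_seq (Suc N)] (mod (int N)\<^sup>2)"
  unfolding cong_iff_dvd_diff
proof (induction m)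
  case 0
  show ?case by simp
next
  case (Suc m)
  define x y a b where "x = press_seq N" and "y = press_seq (Suc N)"
    and "a = press_seq (m * N)" and "b = press_seq (Suc (m * N))"
  have IH: "(int N)\<^sup>2 dvd a - int m * x" "(int N)\<^sup>2 dvd b - int m * y"
    using Suc.IH unfolding x_def y_def a_def b_def by auto
  have "int N dvd (int N)\<^sup>2" by (simp add: power2_eq_square)
  then have "int N dvd (a - int m * x) + int m * x" "int N dvd (b - int m * y) + int m * y"
    using IH assms unfolding x_def y_def by (meson dvd_add dvd_mult dvd_trans)+
  then have "int N dvd a" "int N dvd b" by simp_all
  then have "int N dvd 3 * b + a" by simp
  have sq: "(int N)\<^sup>2 dvd u * w" if "int N dvd u" "int N dvd w" for u w
    using that unfolding power2_eq_square by (rule mult_dvd_mono)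
  have "press_seq (Suc m * N) = (1 - y - 4 * x) * a + (y - x) * b + x"
    using press_seq_add[of "m * N" N] unfolding x_def y_def a_def b_def by (simp add: add.commute)
  then have step_N: "press_seq (Suc m * N) - int (Suc m) * x
      = (a - int m * x) - (y + 4 * x) * a + (y - x) * b"
    by (simp add: algebra_simps)
  have "press_seq (Suc (Suc m * N)) = (1 - y - 4 * x) * b + (y - x) * (1 - 3 * b - a) + x"
    using press_seq_add[of "Suc (m * N)" N] unfolding x_def y_def a_def b_def by (simp add: add.commute)
  then have step_Suc_N: "press_seq (Suc (Suc m * N)) - int (Suc m) * y
      = (b - int m * y) - (y + 4 * x) * b - (y - x) * (3 * b + a)"
    by (simp add: algebra_simps)
  have "int N dvd y + 4 * x" "int N dvd y - x"
    using assms unfolding x_def y_def by simp_all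
  then have "(int N)\<^sup>2 dvd press_seq (Suc m * N) - int (Suc m) * x"
    and "(int N)\<^sup>2 dvd press_seq (Suc (Suc m * N)) - int (Suc m) * y"
    unfolding step_N step_Suc_N using IH sq \<open>int N dvd a\<close> \<open>int N dvd b\<close> \<open>int N dvd 3 * b + a\<close>
    by (metis dvd_add dvd_diff)+
  then show ?case unfolding x_def y_def by blast
qed

lemma pow5_dvd_press_seq:
  assumes "s \<ge> 1"
  shows "int (5 ^ s) dvd press_seq (5 ^ s) \<and> int (5 ^ s) dvd press_seq (Suc (5 ^ s))"
  using assms
proof (induction s rule: dec_induct)
  case base
  have "press_seq 5 = 5 * (-3)" "press_seq 6 = 5 * 8" by (simp_all add: numeral_eq_Suc)
  then show ?case by simp
next
  case (step s)
  define N where "N = (5::nat) ^ s"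
  have N: "int N dvd press_seq N" "int N dvd press_seq (Suc N)"
    using step.IH unfolding N_def by auto
  have "5 dvd N" using \<open>1 \<le> s\<close> unfolding N_def by (simp add: dvd_power)
  then have "5 * N dvd N\<^sup>2"
    unfolding power2_eq_square by (rule mult_dvd_mono) simp
  then have "int (5 * N) dvd (int N)\<^sup>2"
    by (simp only: of_nat_power[symmetric] int_dvd_int_iff)
  with press_seq_mult_cong[OF N, of 5]
  have "[press_seq (5 * N) = 5 * press_seq N] (mod int (5 * N))"
    "[press_seq (Suc (5 * N)) = 5 * press_seq (Suc N)] (mod int (5 * N))"
    by (auto intro: cong_dvd_modulus)
  moreover have "int (5 * N) dvd 5 * press_seq N" "int (5 * N) dvd 5 * press_seq (Suc N)"
    using N by simp_all
  ultimately show ?case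
    unfolding N_def power_Suc by (simp add: cong_dvd_iff)
qed

lemma pow5_dvd_press_seq_Suc:
  assumes "s \<ge> 1" and "5 ^ s dvd i \<or> 5 ^ s dvd Suc i"
  shows "int (5 ^ s) dvd press_seq (Suc i)"
proof -
  define N where "N = (5::nat) ^ s"
  have N: "int N dvd press_seq N" "int N dvd press_seq (Suc N)"
    using pow5_dvd_press_seq[OF assms(1)] unfolding N_def by auto
  have sq: "int N dvd (int N)\<^sup>2" by (simp add: power2_eq_square)
  have mult_cong: "[press_seq (m * N) = int m * press_seq N] (mod int N)"
    "[press_seq (Suc (m * N)) = int m * press_seq (Suc N)] (mod int N)" for m
    using press_seq_mult_cong[OF N, of m] by (auto intro: cong_dvd_modulus[OF _ sq])
  have "int N dvd press_seq (m * N)" "int N dvd press_seq (Suc (m * N))" for m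
    using cong_dvd_iff[OF mult_cong(1)] cong_dvd_iff[OF mult_cong(2)] N by simp_all
  moreover obtain m where "i = m * N \<or> Suc i = m * N"
    using assms(2) unfolding N_def[symmetric] by (metis dvdE mult.commute)
  ultimately show ?thesis
    unfolding N_def[symmetric] by auto
qed

definition toggling_columns :: "nat \<Rightarrow> nat \<Rightarrow> nat \<Rightarrow> nat \<Rightarrow> nat \<times> nat \<Rightarrow> nat set" where
  "toggling_columns i n r j x = {c \<in> {1..j}. x = (r, c) \<or> adjacent i n (r, c) x}"

lemma card_toggling_columns_Suc:
  "card (toggling_columns i n r (Suc j) x)
     = card (toggling_columns i n r j x) + of_bool (x = (r, Suc j) \<or> adjacent i n (r, Suc j) x)"
proof (cases "x = (r, Suc j) \<or> adjacent i n (r, Suc j) x")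
  case True
  then have "toggling_columns i n r (Suc j) x = insert (Suc j) (toggling_columns i n r j x)"
    unfolding toggling_columns_def by auto
  then show ?thesis using True by (simp add: toggling_columns_def)
next
  case False
  then have "toggling_columns i n r (Suc j) x = toggling_columns i n r j x"
    unfolding toggling_columns_def by (auto simp: le_Suc_eq)
  then show ?thesis using False by simp
qed

lemma toggling_columns_above_empty:
  "toggling_columns i n r j (r - 1, Suc j) = {}"
  unfolding toggling_columns_def adjacent_def on_board_def by auto

lemma chase_row_columns_cong:
  assumes "j \<le> n" and "\<forall>c\<in>{1..n}. [st (r - 1, c) = v] (mod int k)"
  shows "[fold (\<lambda>c st'. press k i n (r, c) ((- st' (r - 1, c)) mod int k) st') [1..<Suc j] st x
      = st x - v * int (card (toggling_columns i n r j x))] (mod int k)"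
  using assms(1)
proof (induction j arbitrary: x)
  case 0
  show ?case by (simp add: toggling_columns_def)
next
  case (Suc j)
  define g where "g = fold (\<lambda>c st'. press k i n (r, c) ((- st' (r - 1, c)) mod int k) st') [1..<Suc j] st"
  have IH: "[g y = st y - v * int (card (toggling_columns i n r j y))] (mod int k)" for y
    using Suc unfolding g_def by simp
  have "[g (r - 1, Suc j) = st (r - 1, Suc j)] (mod int k)"
    using IH[of "(r - 1, Suc j)"] unfolding toggling_columns_above_empty by simp
  also have "[st (r - 1, Suc j) = v] (mod int k)"
    using assms(2) Suc.prems by simp
  finally have "[g (r - 1, Suc j) = v] (mod int k)" .
  then have T: "[(- g (r - 1, Suc j)) mod int k = - v] (mod int k)"
    by (simp add: cong_minus_minus_iff)
  define toggled where "toggled = (x = (r, Suc j) \<or> adjacent i n (r, Suc j) x)"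
  have "fold (\<lambda>c st'. press k i n (r, c) ((- st' (r - 1, c)) mod int k) st') [1..<Suc (Suc j)] st x
      = press k i n (r, Suc j) ((- g (r - 1, Suc j)) mod int k) g x"
    by (simp add: g_def)
  also have "[press k i n (r, Suc j) ((- g (r - 1, Suc j)) mod int k) g x
      = g x + (- g (r - 1, Suc j)) mod int k * of_bool toggled] (mod int k)"
    unfolding press_def toggled_def by (simp add: cong_def)
  also have "[g x + (- g (r - 1, Suc j)) mod int k * of_bool toggled
      = (st x - v * int (card (toggling_columns i n r j x))) + (- v) * of_bool toggled] (mod int k)"
    using IH T by (intro cong_add cong_mult) simp_all
  also have "(st x - v * int (card (toggling_columns i n r j x))) + (- v) * of_bool toggled
      = st x - v * int (card (toggling_columns i n r (Suc j) x))"
    unfolding card_toggling_columns_Suc toggled_def by (simp add: algebra_simps)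
  finally show ?case .
qed

lemma cyclic_neighbour_iff:
  assumes "c \<in> {1..n}" and "c' \<in> {1..n}"
  shows "(int c - int c') mod int n \<in> {1, int n - 1} \<longleftrightarrow>
    c' + 1 = c \<or> c + 1 = c' \<or> (c = 1 \<and> c' = n) \<or> (c = n \<and> c' = 1)"
proof (cases "c' \<le> c")
  case True
  then have "(int c - int c') mod int n = int c - int c'"
    using assms by (intro mod_pos_pos_trivial) auto
  then show ?thesis using True assms by auto
next
  case False
  then have "(int c - int c' + int n) mod int n = int c - int c' + int n"
    using assms by (intro mod_pos_pos_trivial) auto
  then have "(int c - int c') mod int n = int c - int c' + int n" by simp
  then show ?thesis using False assms by auto
qed

definition press_weight :: "nat \<Rightarrow> nat \<Rightarrow> nat" where
  "press_weight r \<rho> = (if \<rho> = r then 3 else if \<rho> + 1 = r \<or> \<rho> = r + 1 then 1 else 0)"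

lemma toggling_columns_same_row:
  assumes "n \<ge> 3" and "r \<in> {1..i}" and "c \<in> {1..n}"
  shows "toggling_columns i n r n (r, c) = {c, if c = 1 then n else c - 1, if c = n then 1 else c + 1}"
proof -
  have "toggling_columns i n r n (r, c)
     = {c' \<in> {1..n}. c' = c \<or> c' + 1 = c \<or> c + 1 = c' \<or> (c = 1 \<and> c' = n) \<or> (c = n \<and> c' = 1)}"
    unfolding toggling_columns_def
  proof (intro Collect_cong conj_cong refl)
    fix c' assume "c' \<in> {1..n}"
    then show "((r, c) = (r, c') \<or> adjacent i n (r, c') (r, c)) \<longleftrightarrow>
        c' = c \<or> c' + 1 = c \<or> c + 1 = c' \<or> (c = 1 \<and> c' = n) \<or> (c = n \<and> c' = 1)"
      using assms cyclic_neighbour_iff[OF assms(3)] unfolding adjacent_def on_board_def by auto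
  qed
  also have "\<dots> = {c, if c = 1 then n else c - 1, if c = n then 1 else c + 1}"
    using assms by auto
  finally show ?thesis .
qed

lemma card_toggling_columns:
  assumes "n \<ge> 3" and "r \<in> {1..i}" and "\<rho> \<in> {1..i}" and "c \<in> {1..n}"
  shows "card (toggling_columns i n r n (\<rho>, c)) = press_weight r \<rho>"
proof -
  consider "\<rho> = r" | "\<rho> + 1 = r \<or> \<rho> = r + 1" | "\<rho> \<noteq> r" "\<rho> + 1 \<noteq> r" "\<rho> \<noteq> r + 1"
    by blast
  then show ?thesis
  proof cases
    case 1
    then show ?thesis
      using assms toggling_columns_same_row[OF assms(1,2,4)] by (auto simp: press_weight_def)
  next
    case 2
    then have "toggling_columns i n r n (\<rho>, c) = {c}"
      using assms unfolding toggling_columns_def adjacent_def on_board_def by auto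
    then show ?thesis using 2 by (auto simp: press_weight_def)
  next
    case 3
    then have "toggling_columns i n r n (\<rho>, c) = {}"
      unfolding toggling_columns_def adjacent_def by auto
    then show ?thesis using 3 by (simp add: press_weight_def)
  qed
qed

lemma chase_row_cong:
  assumes "n \<ge> 3" and "r \<in> {1..i}" and "\<forall>c\<in>{1..n}. [st (r - 1, c) = v] (mod int k)"
    and "\<rho> \<in> {1..i}" and "c \<in> {1..n}"
  shows "[chase_row k i n st r (\<rho>, c) = st (\<rho>, c) - v * int (press_weight r \<rho>)] (mod int k)"
  using chase_row_columns_cong[OF le_refl assms(3), where i = i and x = "(\<rho>, c)"]
  unfolding chase_row_def Suc_eq_plus1 card_toggling_columns[OF assms(1,2,4,5)] .

(* The press counts t_j after rows 2, ..., r have been chased, and the light of row \<rho> of a board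
   started uniformly at a after each button of every row j was pressed t_j times (n \<ge> 3). *)
definition chase_presses :: "int \<Rightarrow> nat \<Rightarrow> nat \<Rightarrow> int" where
  "chase_presses a r j = (if j \<le> r then - a * press_seq j else 0)"

definition uniform_light :: "int \<Rightarrow> (nat \<Rightarrow> int) \<Rightarrow> nat \<Rightarrow> int" where
  "uniform_light a t \<rho> = a + t (\<rho> - 1) + 3 * t \<rho> + t (\<rho> + 1)"

lemma uniform_light_chase_presses:
  assumes "1 \<le> \<rho>" and "\<rho> \<le> r"
  shows "uniform_light a (chase_presses a r) \<rho> = (if \<rho> = r then a * press_seq (Suc r) else 0)"
proof -
  obtain p where "\<rho> = Suc p" using assms(1) by (cases \<rho>) auto
  then show ?thesis
    using assms by (cases "\<rho> = r") (auto simp: uniform_light_def chase_presses_def algebra_simps)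
qed

lemma uniform_light_chase_presses_Suc:
  "uniform_light a (chase_presses a (Suc r)) \<rho>
     = uniform_light a (chase_presses a r) \<rho> - a * press_seq (Suc r) * int (press_weight (Suc r) \<rho>)"
  by (cases "\<rho> = r \<or> \<rho> = Suc r")
    (auto simp: uniform_light_def chase_presses_def press_weight_def algebra_simps)

lemma chase_rows_cong:
  assumes "n \<ge> 3" and "1 \<le> r" and "r \<le> i" and "\<rho> \<in> {1..i}" and "c \<in> {1..n}"
  shows "[fold (\<lambda>r st. chase_row k i n st r) [2..<Suc r] (\<lambda>_. a) (\<rho>, c)
      = uniform_light a (chase_presses a r) \<rho>] (mod int k)"
  using assms(2-5)
proof (induction r arbitrary: \<rho> c rule: nat_induct_at_least)
  case base
  have "chase_presses a 1 = (\<lambda>_. 0)"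
    by (auto simp: chase_presses_def le_Suc_eq)
  then show ?case by (simp add: uniform_light_def)
next
  case (Suc r)
  define st where "st = fold (\<lambda>r st. chase_row k i n st r) [2..<Suc r] (\<lambda>_. a)"
  have "\<forall>c\<in>{1..n}. [st (Suc r - 1, c) = a * press_seq (Suc r)] (mod int k)"
    using Suc.IH[of r] Suc.hyps Suc.prems uniform_light_chase_presses[of r r a]
    unfolding st_def by auto
  from chase_row_cong[OF assms(1) _ this Suc.prems(2,3)]
  have "[chase_row k i n st (Suc r) (\<rho>, c)
      = st (\<rho>, c) - a * press_seq (Suc r) * int (press_weight (Suc r) \<rho>)] (mod int k)"
    using Suc.hyps Suc.prems by simp
  also have "[st (\<rho>, c) - a * press_seq (Suc r) * int (press_weight (Suc r) \<rho>)
      = uniform_light a (chase_presses a (Suc r)) \<rho>] (mod int k)"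
    using Suc.IH[of \<rho> c] Suc.prems unfolding st_def uniform_light_chase_presses_Suc
    by (intro cong_diff) simp_all
  finally show ?case
    using Suc.hyps by (simp add: st_def)
qed

theorem theorem8:
  fixes s q n i :: nat
  assumes "s \<ge> 1" and "1 \<le> q" and "q \<le> 5 ^ s - 1" and "n \<ge> 3" and "i \<ge> 1"
    and "int i mod (5 ^ s) = 0 \<or> (int i + 1) mod (5 ^ s) = 0"
  shows "one_pass_solvable (5 ^ s) i n (\<lambda>_. int (5 ^ s) - int q)"
proof -
  define k where "k = (5::nat) ^ s"
  define a where "a = int k - int q"
  have "(5::int) ^ s = int k" unfolding k_def by simp
  then have "int k dvd int i \<or> int k dvd int (Suc i)"
    using assms(6) by (simp only: dvd_eq_mod_eq_0 of_nat_Suc add.commute)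
  then have "k dvd i \<or> k dvd Suc i" by (simp only: int_dvd_int_iff)
  then have "int k dvd press_seq (Suc i)"
    using pow5_dvd_press_seq_Suc[OF assms(1)] unfolding k_def by blast
  have "[one_pass k i n (\<lambda>_. a) (\<rho>, c) = 0] (mod int k)" if "\<rho> \<in> {1..i}" "c \<in> {1..n}" for \<rho> c
  proof -
    have "[one_pass k i n (\<lambda>_. a) (\<rho>, c) = uniform_light a (chase_presses a i) \<rho>] (mod int k)"
      using chase_rows_cong[OF assms(4,5) le_refl that] by (simp add: one_pass_def)
    also have "[uniform_light a (chase_presses a i) \<rho> = 0] (mod int k)"
      using that uniform_light_chase_presses[of \<rho> i a] \<open>int k dvd press_seq (Suc i)\<close>
      by (auto simp: cong_0_iff)
    finally show ?thesis .
  qed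
  then show ?thesis
    unfolding one_pass_solvable_def k_def[symmetric] a_def[symmetric] by (simp add: cong_0_iff)
qed

end
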